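(* Let $\Gamma$ be a positive recursive absorbing game with payoffs in $(0,1]$. For each player $i\in I$ there exists a stationary profile $x_{-i}\in\prod_{j\ne i}\Delta(A_j)$ of the other players such that $\gamma_i(\sigma_i,x_{-i})\le v_i$ for every strategy $\sigma_i\in\Sigma_i$ of player $i$ (i.e., a stationary minmaxing profile against $i$ exists).
   Context: A positive recursive absorbing game is $\Gamma=(I,(A_i)_{i\in I},(r_i)_{i\in I},p)$ with $I$ a finite set of players, $A_i$ finite nonempty action sets, $A=\prod_i A_i$, $r_i:A\to(0,1]$, $p:A\to[0,1]$. At each stage, if not yet absorbed, players choose actions $a^n\in A$; with probability $p(a^n)$ the game absorbs with terminal payoff $r(a^n)$, otherwise continues (payoff $0$ in the nonabsorbing state). $\theta$ is the absorption stage. Behavior strategies $\sigma_i:\bigcup_{n\ge0}A^n\to\Delta(A_i)$ form $\Sigma_i$; $\Sigma_{-i}=\prod_{j\neq i}\Sigma_j$. The undiscounted payoff is $\gamma(\sigma)=\mathbf E_\sigma[r(a^\theta)\mathbf 1_{\theta<\infty}]$. A stationary strategy of player $j$ plays a fixed mixed action $x_j\in\Delta(A_j)$ at every stage regardless of history. Player $i$'s minmax value is $v_i:=\inf_{\sigma_{-i}\in\Sigma_{-i}}\sup_{\sigma_i\in\Sigma_i}\gamma_i(\sigma_i,\sigma_{-i})$. *)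

theory Defs
  imports "HOL-Probability.Probability_Mass_Function"
begin

definition profiles :: "('i \<Rightarrow> 'a set) \<Rightarrow> ('i \<Rightarrow> 'a) set" where
  "profiles A = PiE UNIV A"

definition histories :: "('i \<Rightarrow> 'a set) \<Rightarrow> nat \<Rightarrow> ('i \<Rightarrow> 'a) list set" where
  "histories A n = {h. length h = n \<and> set h \<subseteq> profiles A}"

definition is_strategy :: "('i \<Rightarrow> 'a set) \<Rightarrow> 'i \<Rightarrow> (('i \<Rightarrow> 'a) list \<Rightarrow> 'a pmf) \<Rightarrow> bool" where
  "is_strategy A j s \<longleftrightarrow> (\<forall>h. set_pmf (s h) \<subseteq> A j)"

definition is_profile :: "('i \<Rightarrow> 'a set) \<Rightarrow> ('i \<Rightarrow> ('i \<Rightarrow> 'a) list \<Rightarrow> 'a pmf) \<Rightarrow> bool" where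
  "is_profile A \<sigma> \<longleftrightarrow> (\<forall>j. is_strategy A j (\<sigma> j))"

definition act_prob :: "('i::finite \<Rightarrow> ('i \<Rightarrow> 'a) list \<Rightarrow> 'a pmf) \<Rightarrow> ('i \<Rightarrow> 'a) list \<Rightarrow> ('i \<Rightarrow> 'a) \<Rightarrow> real" where
  "act_prob \<sigma> h a = (\<Prod>j\<in>UNIV. pmf (\<sigma> j h) (a j))"

text \<open>Probability that history h is realized and the game has not absorbed during h.\<close>
definition reach :: "(('i \<Rightarrow> 'a) \<Rightarrow> real) \<Rightarrow> ('i::finite \<Rightarrow> ('i \<Rightarrow> 'a) list \<Rightarrow> 'a pmf) \<Rightarrow> ('i \<Rightarrow> 'a) list \<Rightarrow> real" where
  "reach p \<sigma> h = (\<Prod>k<length h. act_prob \<sigma> (take k h) (h ! k) * (1 - p (h ! k)))"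

text \<open>Undiscounted payoff E[r_i(a^\<theta>) 1_{\<theta><\<infinity>}]: sum over absorption stages n
  (the history before absorption has length n) of the probability of absorbing
  with profile a times r_i(a).\<close>
definition payoff :: "('i \<Rightarrow> 'a set) \<Rightarrow> ('i \<Rightarrow> ('i \<Rightarrow> 'a) \<Rightarrow> real) \<Rightarrow> (('i \<Rightarrow> 'a) \<Rightarrow> real)
    \<Rightarrow> ('i::finite \<Rightarrow> ('i \<Rightarrow> 'a) list \<Rightarrow> 'a pmf) \<Rightarrow> 'i \<Rightarrow> real" where
  "payoff A r p \<sigma> i = (\<Sum>n. \<Sum>h\<in>histories A n. reach p \<sigma> h *
      (\<Sum>a\<in>profiles A. act_prob \<sigma> h a * p a * r i a))"

text \<open>The others' strategies are represented by a full profile \<tau> whose i-th component is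
  overridden by player i's strategy s.\<close>
definition minmax :: "('i \<Rightarrow> 'a set) \<Rightarrow> ('i \<Rightarrow> ('i \<Rightarrow> 'a) \<Rightarrow> real) \<Rightarrow> (('i \<Rightarrow> 'a) \<Rightarrow> real)
    \<Rightarrow> 'i::finite \<Rightarrow> real" where
  "minmax A r p i = (INF \<tau>\<in>{\<tau>. is_profile A \<tau>}.
      SUP s\<in>{s. is_strategy A i s}. payoff A r p (\<tau>(i := s)) i)"

definition pos_rec_absorbing_game :: "('i::finite \<Rightarrow> 'a set) \<Rightarrow> ('i \<Rightarrow> ('i \<Rightarrow> 'a) \<Rightarrow> real)
    \<Rightarrow> (('i \<Rightarrow> 'a) \<Rightarrow> real) \<Rightarrow> bool" where
  "pos_rec_absorbing_game A r p \<longleftrightarrow>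
     (\<forall>j. finite (A j) \<and> A j \<noteq> {}) \<and>
     (\<forall>j. \<forall>a\<in>profiles A. 0 < r j a \<and> r j a \<le> 1) \<and>
     (\<forall>a\<in>profiles A. 0 \<le> p a \<and> p a \<le> 1)"

end

theory Submission
  imports Defs
begin

text \<open>Fix player \<open>i\<close>. For a stationary mixed profile \<open>y\<close> of the other players and a pure
  action \<open>b\<close> of \<open>i\<close>, let \<open>P(y,b)\<close> be the probability of absorbing in one stage and \<open>R(y,b)\<close>
  the expected absorbing payoff of \<open>i\<close> in that stage. Let \<open>c\<close> be the least \<open>d \<ge> 0\<close> such that
  some \<open>y\<close> satisfies \<open>R(y,b) \<le> d P(y,b)\<close> for all \<open>b\<close>; by compactness of the mixed profiles the
  least value is attained by some \<open>y\<close>. Against this stationary \<open>y\<close> every stage of any strategy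
  of \<open>i\<close> earns at most \<open>c\<close> times its absorption probability, so \<open>i\<close> gets at most \<open>c\<close>.
  Conversely, compactness yields \<open>\<delta> > 0\<close> such that against every mixed profile of the others
  \<open>i\<close> has a pure reply absorbing with probability at least \<open>\<delta>\<close> and earning at least \<open>c - \<epsilon>\<close>
  times that probability. Playing it after every history against an arbitrary behaviour
  profile of the others, \<open>i\<close> absorbs almost surely and gets at least \<open>c - \<epsilon>\<close>; hence \<open>c \<le> v\<^sub>i\<close>.\<close>

lemma finite_family_convergent_subseq:
  fixes f :: "nat \<Rightarrow> 'k \<Rightarrow> 'b::metric_space"
  assumes "finite S" "compact K" "\<And>n k. k \<in> S \<Longrightarrow> f n k \<in> K"
  shows "\<exists>rr l. strict_mono rr \<and> (\<forall>k\<in>S. (\<lambda>n. f (rr n) k) \<longlonglongrightarrow> l k)"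
  using assms(1,3)
proof (induction S rule: finite_induct)
  case empty
  show ?case using strict_mono_id by blast
next
  case (insert k S)
  then obtain rr l where rr: "strict_mono rr" and l: "\<forall>k\<in>S. (\<lambda>n. f (rr n) k) \<longlonglongrightarrow> l k"
    by blast
  have "\<forall>n. f (rr n) k \<in> K" using insert.prems by simp
  then obtain lk r' where r': "strict_mono r'" and lk: "((\<lambda>n. f (rr n) k) \<circ> r') \<longlonglongrightarrow> lk"
    using compact_imp_seq_compact[OF assms(2)] unfolding seq_compact_def by metis
  have "(\<lambda>n. f ((rr \<circ> r') n) k') \<longlonglongrightarrow> (l(k := lk)) k'" if "k' \<in> insert k S" for k'
  proof (cases "k' = k")
    case True
    then show ?thesis using lk by (simp add: comp_def)
  next
    case False
    then have "((\<lambda>n. f (rr n) k') \<circ> r') \<longlonglongrightarrow> l k'"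
      using that l r' by (intro LIMSEQ_subseq_LIMSEQ) auto
    then show ?thesis using False by (simp add: comp_def)
  qed
  then show ?case using strict_mono_o[OF rr r'] by blast
qed

lemma exists_pmf_of_weights:
  fixes w :: "'a \<Rightarrow> real"
  assumes "finite S" "\<And>b. b \<in> S \<Longrightarrow> 0 \<le> w b" "sum w S = 1"
  shows "\<exists>x. set_pmf x \<subseteq> S \<and> (\<forall>b\<in>S. pmf x b = w b)"
proof -
  define f where "f b = (if b \<in> S then w b else 0)" for b
  have "(\<integral>\<^sup>+ b. ennreal (f b) \<partial>count_space UNIV) = (\<Sum>b\<in>S. ennreal (w b))"
    using assms(1) by (subst nn_integral_count_space') (auto simp: f_def)
  also have "\<dots> = 1"
    using assms by (subst sum_ennreal) auto
  finally have "pmf (embed_pmf f) b = f b" for b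
    using assms(2) by (intro pmf_embed_pmf) (auto simp: f_def)
  then have "set_pmf (embed_pmf f) \<subseteq> S \<and> (\<forall>b\<in>S. pmf (embed_pmf f) b = w b)"
    by (auto simp: set_pmf_eq f_def split: if_splits)
  then show ?thesis by blast
qed

locale absorbing_game =
  fixes A :: "'i::finite \<Rightarrow> 'a set" and r :: "'i \<Rightarrow> ('i \<Rightarrow> 'a) \<Rightarrow> real"
    and p :: "('i \<Rightarrow> 'a) \<Rightarrow> real" and i :: 'i
  assumes game: "pos_rec_absorbing_game A r p"
begin

lemma finite_actions: "finite (A j)" and actions_nonempty: "A j \<noteq> {}"
  using game by (auto simp: pos_rec_absorbing_game_def)

lemma reward_pos: "a \<in> profiles A \<Longrightarrow> 0 < r j a"
  and reward_le_1: "a \<in> profiles A \<Longrightarrow> r j a \<le> 1"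
  and absorption_nonneg: "a \<in> profiles A \<Longrightarrow> 0 \<le> p a"
  and absorption_le_1: "a \<in> profiles A \<Longrightarrow> p a \<le> 1"
  using game by (auto simp: pos_rec_absorbing_game_def)

lemma finite_profiles: "finite (profiles A)"
  by (simp add: profiles_def finite_PiE finite_actions)

lemma profiles_memD: "a \<in> profiles A \<Longrightarrow> a j \<in> A j"
  by (auto simp: profiles_def)

lemma histories_0: "histories A 0 = {[]}"
  by (auto simp: histories_def)

lemma histories_Suc:
  "histories A (Suc n) = (\<lambda>(h, a). h @ [a]) ` (histories A n \<times> profiles A)"
proof (intro equalityI subsetI)
  fix h' assume h': "h' \<in> histories A (Suc n)"
  then have "h' \<noteq> []" by (auto simp: histories_def)
  moreover have "butlast h' \<in> histories A n" "last h' \<in> profiles A"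
    using h' \<open>h' \<noteq> []\<close> in_set_butlastD last_in_set by (fastforce simp: histories_def)+
  ultimately show "h' \<in> (\<lambda>(h, a). h @ [a]) ` (histories A n \<times> profiles A)"
    by (intro image_eqI[of _ _ "(butlast h', last h')"]) auto
qed (auto simp: histories_def)

lemma sum_histories_Suc:
  "(\<Sum>h\<in>histories A (Suc n). f h) = (\<Sum>h\<in>histories A n. \<Sum>a\<in>profiles A. f (h @ [a]))"
proof -
  have "inj_on (\<lambda>(h, a). h @ [a]) (histories A n \<times> profiles A)"
    by (auto simp: inj_on_def)
  then show ?thesis
    unfolding histories_Suc by (simp add: sum.reindex sum.cartesian_product prod.case_distrib)
qed

lemma profile_update: "is_profile A \<tau> \<Longrightarrow> is_strategy A i s \<Longrightarrow> is_profile A (\<tau>(i := s))"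
  by (auto simp: is_profile_def)

lemma profile_exists: "\<exists>\<tau>. is_profile A \<tau>"
proof -
  have "(SOME b. b \<in> A j) \<in> A j" for j
    using actions_nonempty by (simp add: some_in_eq)
  then have "is_profile A (\<lambda>j h. return_pmf (SOME b. b \<in> A j))"
    by (auto simp: is_profile_def is_strategy_def)
  then show ?thesis by blast
qed

section \<open>Absorption along a play\<close>

definition expect_at :: "('i \<Rightarrow> ('i \<Rightarrow> 'a) list \<Rightarrow> 'a pmf) \<Rightarrow> ('i \<Rightarrow> 'a) list
    \<Rightarrow> (('i \<Rightarrow> 'a) \<Rightarrow> real) \<Rightarrow> real" where
  "expect_at \<sigma> h g = (\<Sum>a\<in>profiles A. act_prob \<sigma> h a * g a)"

abbreviation absorb_prob where "absorb_prob \<sigma> h \<equiv> expect_at \<sigma> h p"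

abbreviation absorb_reward where "absorb_reward \<sigma> h \<equiv> expect_at \<sigma> h (\<lambda>a. p a * r i a)"

definition survival :: "('i \<Rightarrow> ('i \<Rightarrow> 'a) list \<Rightarrow> 'a pmf) \<Rightarrow> nat \<Rightarrow> real" where
  "survival \<sigma> n = (\<Sum>h\<in>histories A n. reach p \<sigma> h)"

definition stage_payoff :: "('i \<Rightarrow> ('i \<Rightarrow> 'a) list \<Rightarrow> 'a pmf) \<Rightarrow> nat \<Rightarrow> real" where
  "stage_payoff \<sigma> n = (\<Sum>h\<in>histories A n. reach p \<sigma> h * absorb_reward \<sigma> h)"

lemma payoff_eq_suminf: "payoff A r p \<sigma> i = (\<Sum>n. stage_payoff \<sigma> n)"
  by (simp add: payoff_def stage_payoff_def expect_at_def mult.assoc)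

lemma act_prob_nonneg: "0 \<le> act_prob \<sigma> h a"
  by (simp add: act_prob_def prod_nonneg)

lemma sum_act_prob:
  assumes "is_profile A \<sigma>"
  shows "(\<Sum>a\<in>profiles A. act_prob \<sigma> h a) = 1"
proof -
  have "(\<Sum>a\<in>profiles A. act_prob \<sigma> h a) = (\<Prod>j\<in>UNIV. \<Sum>b\<in>A j. pmf (\<sigma> j h) b)"
    by (simp add: prod_sum_PiE finite_actions profiles_def act_prob_def)
  also have "\<dots> = 1"
    using assms by (simp add: sum_pmf_eq_1 finite_actions is_profile_def is_strategy_def)
  finally show ?thesis .
qed

lemma expect_at_mono:
  "(\<And>a. a \<in> profiles A \<Longrightarrow> g a \<le> g' a) \<Longrightarrow> expect_at \<sigma> h g \<le> expect_at \<sigma> h g'"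
  unfolding expect_at_def by (intro sum_mono mult_left_mono act_prob_nonneg)

lemma expect_at_const: "is_profile A \<sigma> \<Longrightarrow> expect_at \<sigma> h (\<lambda>_. c) = c"
  by (simp add: expect_at_def sum_distrib_right[symmetric] sum_act_prob)

lemma absorb_prob_le_1:
  assumes "is_profile A \<sigma>"
  shows "absorb_prob \<sigma> h \<le> 1"
proof -
  have "absorb_prob \<sigma> h \<le> expect_at \<sigma> h (\<lambda>_. 1)"
    by (intro expect_at_mono absorption_le_1)
  then show ?thesis by (simp add: expect_at_const[OF assms])
qed

lemma absorb_reward_nonneg: "0 \<le> absorb_reward \<sigma> h"
  using expect_at_mono[of "\<lambda>_. 0"] absorption_nonneg reward_pos
  by (simp add: expect_at_def less_imp_le)

lemma absorb_reward_le_prob: "absorb_reward \<sigma> h \<le> absorb_prob \<sigma> h"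
  by (intro expect_at_mono mult_left_le reward_le_1 absorption_nonneg)

lemma reach_nonneg: "h \<in> histories A n \<Longrightarrow> 0 \<le> reach p \<sigma> h"
  unfolding reach_def histories_def
  by (intro prod_nonneg ballI mult_nonneg_nonneg act_prob_nonneg) (auto intro!: absorption_le_1)

lemma reach_snoc: "reach p \<sigma> (h @ [a]) = reach p \<sigma> h * (act_prob \<sigma> h a * (1 - p a))"
proof -
  have "reach p \<sigma> h = (\<Prod>k<length h. act_prob \<sigma> (take k (h @ [a])) ((h @ [a]) ! k)
      * (1 - p ((h @ [a]) ! k)))"
    unfolding reach_def by (intro prod.cong) (auto simp: nth_append)
  then show ?thesis by (simp add: reach_def prod.lessThan_Suc)
qed

lemma survival_0: "survival \<sigma> 0 = 1"
  by (simp add: survival_def histories_0 reach_def)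

lemma survival_nonneg: "0 \<le> survival \<sigma> n"
  unfolding survival_def by (intro sum_nonneg reach_nonneg)

lemma survival_Suc:
  assumes "is_profile A \<sigma>"
  shows "survival \<sigma> (Suc n) = (\<Sum>h\<in>histories A n. reach p \<sigma> h * (1 - absorb_prob \<sigma> h))"
proof -
  have "(\<Sum>a\<in>profiles A. act_prob \<sigma> h a * (1 - p a)) = 1 - absorb_prob \<sigma> h" for h
    using expect_at_const[OF assms, of h 1]
    by (simp add: expect_at_def right_diff_distrib sum_subtractf)
  then show ?thesis
    by (simp add: survival_def sum_histories_Suc reach_snoc sum_distrib_left[symmetric])
qed

lemma scaled_survival_drop:
  assumes "is_profile A \<sigma>"
  shows "d * (survival \<sigma> n - survival \<sigma> (Suc n))
    = (\<Sum>h\<in>histories A n. reach p \<sigma> h * (d * absorb_prob \<sigma> h))"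
  unfolding survival_Suc[OF assms] unfolding survival_def
  by (simp add: sum_distrib_left sum_subtractf[symmetric] algebra_simps)

lemma sum_survival_drop: "(\<Sum>n<N. survival \<sigma> n - survival \<sigma> (Suc n)) = 1 - survival \<sigma> N"
  using sum_lessThan_telescope'[of "survival \<sigma>" N] by (simp add: survival_0)

lemma survival_le_power:
  assumes "is_profile A \<sigma>" "\<And>h. \<delta> \<le> absorb_prob \<sigma> h"
  shows "survival \<sigma> n \<le> (1 - \<delta>) ^ n"
proof (induction n)
  case 0
  then show ?case by (simp add: survival_0)
next
  case (Suc n)
  have "\<delta> \<le> 1" using assms absorb_prob_le_1 order_trans by blast
  have "survival \<sigma> (Suc n) \<le> (\<Sum>h\<in>histories A n. reach p \<sigma> h * (1 - \<delta>))"
    unfolding survival_Suc[OF assms(1)]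
    by (intro sum_mono mult_left_mono reach_nonneg) (simp add: assms(2))
  also have "\<dots> = (1 - \<delta>) * survival \<sigma> n"
    by (simp add: survival_def sum_distrib_left mult.commute)
  also have "\<dots> \<le> (1 - \<delta>) ^ Suc n"
    using Suc.IH \<open>\<delta> \<le> 1\<close> by (simp add: mult_left_mono)
  finally show ?case .
qed

lemma stage_payoff_nonneg: "0 \<le> stage_payoff \<sigma> n"
  unfolding stage_payoff_def
  by (intro sum_nonneg mult_nonneg_nonneg reach_nonneg absorb_reward_nonneg)

lemma sum_stage_payoff_le:
  assumes "is_profile A \<sigma>" "0 \<le> d" "\<And>h. absorb_reward \<sigma> h \<le> d * absorb_prob \<sigma> h"
  shows "(\<Sum>n<N. stage_payoff \<sigma> n) \<le> d"
proof -
  have "(\<Sum>n<N. stage_payoff \<sigma> n) \<le> (\<Sum>n<N. d * (survival \<sigma> n - survival \<sigma> (Suc n)))"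
    unfolding scaled_survival_drop[OF assms(1)] stage_payoff_def
    by (intro sum_mono mult_left_mono assms(3) reach_nonneg)
  also have "\<dots> = d * (1 - survival \<sigma> N)"
    by (simp add: sum_distrib_left[symmetric] sum_survival_drop)
  also have "\<dots> \<le> d"
    using survival_nonneg assms(2) by (simp add: right_diff_distrib)
  finally show ?thesis .
qed

lemma summable_stage_payoff: "is_profile A \<sigma> \<Longrightarrow> summable (stage_payoff \<sigma>)"
  using sum_stage_payoff_le[of \<sigma> 1] absorb_reward_le_prob
  by (intro summableI_nonneg_bounded[OF stage_payoff_nonneg]) auto

lemma payoff_nonneg: "is_profile A \<sigma> \<Longrightarrow> 0 \<le> payoff A r p \<sigma> i"
  by (simp add: payoff_eq_suminf suminf_nonneg summable_stage_payoff stage_payoff_nonneg)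

lemma payoff_le:
  assumes "is_profile A \<sigma>" "0 \<le> d" "\<And>h. absorb_reward \<sigma> h \<le> d * absorb_prob \<sigma> h"
  shows "payoff A r p \<sigma> i \<le> d"
  unfolding payoff_eq_suminf
  using summable_stage_payoff[OF assms(1)] sum_stage_payoff_le[OF assms]
  by (intro suminf_le_const) auto

lemma payoff_le_1: "is_profile A \<sigma> \<Longrightarrow> payoff A r p \<sigma> i \<le> 1"
  by (rule payoff_le) (auto simp: absorb_reward_le_prob)

text \<open>Absorption probability bounded away from \<open>0\<close> makes the survival probability vanish
  geometrically, so the ratio bound carries over to the payoff.\<close>

lemma payoff_ge:
  assumes "is_profile A \<sigma>" "0 \<le> e" "0 < \<delta>" "\<And>h. \<delta> \<le> absorb_prob \<sigma> h"
    and "\<And>h. e * absorb_prob \<sigma> h \<le> absorb_reward \<sigma> h"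
  shows "e \<le> payoff A r p \<sigma> i"
proof -
  have partial: "e * (1 - (1 - \<delta>) ^ N) \<le> payoff A r p \<sigma> i" for N
  proof -
    have "e * (1 - (1 - \<delta>) ^ N) \<le> e * (1 - survival \<sigma> N)"
      using survival_le_power[OF assms(1,4)] assms(2) by (intro mult_left_mono) auto
    also have "\<dots> = (\<Sum>n<N. e * (survival \<sigma> n - survival \<sigma> (Suc n)))"
      by (simp add: sum_distrib_left[symmetric] sum_survival_drop)
    also have "\<dots> \<le> (\<Sum>n<N. stage_payoff \<sigma> n)"
      unfolding scaled_survival_drop[OF assms(1)] stage_payoff_def
      by (intro sum_mono mult_left_mono assms(5) reach_nonneg)
    also have "\<dots> \<le> payoff A r p \<sigma> i"
      unfolding payoff_eq_suminf
      by (intro sum_le_suminf summable_stage_payoff assms(1) stage_payoff_nonneg) auto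
    finally show ?thesis .
  qed
  have "\<delta> \<le> 1" using assms(1,4) absorb_prob_le_1 order_trans by blast
  then have "(\<lambda>N. e * (1 - (1 - \<delta>) ^ N)) \<longlonglongrightarrow> e * (1 - 0)"
    using assms(3) by (intro tendsto_intros LIMSEQ_power_zero) auto
  then show ?thesis using partial by (intro LIMSEQ_le_const2) auto
qed

section \<open>Stationary mixed profiles of the other players\<close>

text \<open>Mixed profiles are real-valued probability vectors rather than pmfs, so that they form a
  compact set.\<close>

definition mixed_profile :: "('i \<Rightarrow> 'a \<Rightarrow> real) \<Rightarrow> bool" where
  "mixed_profile y \<longleftrightarrow> (\<forall>j. (\<forall>b\<in>A j. 0 \<le> y j b) \<and> sum (y j) (A j) = 1)"

definition others_expect :: "('i \<Rightarrow> 'a \<Rightarrow> real) \<Rightarrow> (('i \<Rightarrow> 'a) \<Rightarrow> real) \<Rightarrow> 'a \<Rightarrow> real" where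
  "others_expect y g b = (\<Sum>a\<in>{a\<in>profiles A. a i = b}. (\<Prod>j\<in>UNIV - {i}. y j (a j)) * g a)"

abbreviation stage_absorb where "stage_absorb y \<equiv> others_expect y p"

abbreviation stage_reward where "stage_reward y \<equiv> others_expect y (\<lambda>a. p a * r i a)"

definition reward_ratio_le :: "('i \<Rightarrow> 'a \<Rightarrow> real) \<Rightarrow> real \<Rightarrow> bool" where
  "reward_ratio_le y d \<longleftrightarrow> (\<forall>b\<in>A i. stage_reward y b \<le> d * stage_absorb y b)"

definition ratio_bounds :: "real set" where
  "ratio_bounds = {d. 0 \<le> d \<and> (\<exists>y. mixed_profile y \<and> reward_ratio_le y d)}"

definition ratio_value :: real where
  "ratio_value = Inf ratio_bounds"

definition mixed_at :: "('i \<Rightarrow> ('i \<Rightarrow> 'a) list \<Rightarrow> 'a pmf) \<Rightarrow> ('i \<Rightarrow> 'a) list \<Rightarrow> 'i \<Rightarrow> 'a \<Rightarrow> real"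
  where "mixed_at \<tau> h = (\<lambda>j b. pmf (\<tau> j h) b)"

lemma mixed_profile_mixed_at: "is_profile A \<tau> \<Longrightarrow> mixed_profile (mixed_at \<tau> h)"
  unfolding mixed_profile_def mixed_at_def is_profile_def is_strategy_def
  by (simp add: sum_pmf_eq_1 finite_actions)

lemma mixed_profile_exists: "\<exists>y. mixed_profile y"
proof -
  have "card (A j) > 0" for j
    using finite_actions actions_nonempty by (simp add: card_gt_0_iff)
  then have "mixed_profile (\<lambda>j b. 1 / card (A j))"
    by (simp add: mixed_profile_def)
  then show ?thesis by blast
qed

lemma others_expect_cong:
  assumes "\<And>j b. b \<in> A j \<Longrightarrow> y j b = y' j b"
  shows "others_expect y g = others_expect y' g"
proof -
  have "(\<Prod>j\<in>UNIV - {i}. y j (a j)) = (\<Prod>j\<in>UNIV - {i}. y' j (a j))" if "a \<in> profiles A" for a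
    using that by (intro prod.cong) (auto simp: assms profiles_memD)
  then show ?thesis unfolding others_expect_def by (auto intro!: sum.cong)
qed

lemma others_expect_mono:
  assumes "mixed_profile y" "\<And>a. a \<in> profiles A \<Longrightarrow> g a \<le> g' a"
  shows "others_expect y g b \<le> others_expect y g' b"
  using assms unfolding others_expect_def mixed_profile_def
  by (intro sum_mono mult_left_mono prod_nonneg) (auto intro: profiles_memD)

lemma stage_absorb_nonneg: "mixed_profile y \<Longrightarrow> 0 \<le> stage_absorb y b"
  using others_expect_mono[of y "\<lambda>_. 0" p] absorption_nonneg by (simp add: others_expect_def)

lemma stage_reward_le_absorb: "mixed_profile y \<Longrightarrow> stage_reward y b \<le> stage_absorb y b"
  by (intro others_expect_mono mult_left_le reward_le_1 absorption_nonneg)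

lemma others_expect_tendsto:
  assumes "\<forall>j. \<forall>b\<in>A j. (\<lambda>n. Y n j b) \<longlonglongrightarrow> y j b"
  shows "(\<lambda>n. others_expect (Y n) g b) \<longlonglongrightarrow> others_expect y g b"
  unfolding others_expect_def using assms by (auto intro!: tendsto_intros profiles_memD)

lemma expect_at_update:
  "expect_at (\<tau>(i := s)) h g = (\<Sum>b\<in>A i. pmf (s h) b * others_expect (mixed_at \<tau> h) g b)"
proof -
  have act: "act_prob (\<tau>(i := s)) h a = pmf (s h) (a i) * (\<Prod>j\<in>UNIV - {i}. pmf (\<tau> j h) (a j))"
    for a
    unfolding act_prob_def by (subst prod.remove[of UNIV i]) (auto intro!: prod.cong)
  have "(\<Sum>b\<in>A i. pmf (s h) b * others_expect (mixed_at \<tau> h) g b)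
      = (\<Sum>b\<in>A i. \<Sum>a\<in>{a\<in>profiles A. a i = b}. act_prob (\<tau>(i := s)) h a * g a)"
    by (auto simp: others_expect_def mixed_at_def sum_distrib_left act mult_ac intro!: sum.cong)
  also have "\<dots> = expect_at (\<tau>(i := s)) h g"
    unfolding expect_at_def
    by (rule sum.group) (auto simp: finite_profiles finite_actions profiles_memD)
  finally show ?thesis by simp
qed

lemma mixed_convergent_subseq:
  fixes Y :: "nat \<Rightarrow> 'i \<Rightarrow> 'a \<Rightarrow> real"
  assumes "\<And>n. mixed_profile (Y n)"
  shows "\<exists>rr y. strict_mono rr \<and> mixed_profile y \<and> (\<forall>j. \<forall>b\<in>A j. (\<lambda>n. Y (rr n) j b) \<longlonglongrightarrow> y j b)"
proof -
  have "Y n j b \<in> {0..1}" if "b \<in> A j" for n j b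
  proof -
    have "Y n j b \<le> sum (Y n j) (A j)"
      using assms[of n] that by (intro member_le_sum) (auto simp: mixed_profile_def finite_actions)
    then show ?thesis using assms[of n] that by (simp add: mixed_profile_def)
  qed
  then have bounds: "(case k of (j, b) \<Rightarrow> Y n j b) \<in> {0..1}" if "k \<in> Sigma UNIV A" for n k
    using that by auto
  have "finite (Sigma UNIV A)"
    by (simp add: finite_actions)
  then have "\<exists>rr l. strict_mono rr
      \<and> (\<forall>k\<in>Sigma UNIV A. (\<lambda>n. case k of (j, b) \<Rightarrow> Y (rr n) j b) \<longlonglongrightarrow> l k)"
    using bounds
    by (rule finite_family_convergent_subseq[OF _ compact_Icc, where f = "\<lambda>n (j, b). Y n j b"])
  then obtain rr l where rr: "strict_mono rr"
    and l: "\<forall>k\<in>Sigma UNIV A. (\<lambda>n. case k of (j, b) \<Rightarrow> Y (rr n) j b) \<longlonglongrightarrow> l k"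
    by blast
  define y where "y j b = l (j, b)" for j b
  have conv: "\<forall>j. \<forall>b\<in>A j. (\<lambda>n. Y (rr n) j b) \<longlonglongrightarrow> y j b"
    using l by (auto simp: y_def)
  have "sum (y j) (A j) = 1" for j
  proof -
    have "(\<lambda>n. sum (Y (rr n) j) (A j)) \<longlonglongrightarrow> sum (y j) (A j)"
      using conv by (auto intro!: tendsto_sum)
    then have "(\<lambda>n. 1 :: real) \<longlonglongrightarrow> sum (y j) (A j)"
      using assms by (simp add: mixed_profile_def)
    then show ?thesis by (simp add: LIMSEQ_const_iff)
  qed
  moreover have "0 \<le> y j b" if "b \<in> A j" for j b
    using that conv assms
    by (intro LIMSEQ_le_const[of "\<lambda>n. Y (rr n) j b"]) (auto simp: mixed_profile_def)
  ultimately have "mixed_profile y" by (simp add: mixed_profile_def)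
  with rr conv show ?thesis by blast
qed

lemma reward_le_limit:
  assumes "\<forall>j. \<forall>b\<in>A j. (\<lambda>n. Y n j b) \<longlonglongrightarrow> y j b" "D \<longlonglongrightarrow> d"
    and "\<forall>\<^sub>F n in sequentially. stage_reward (Y n) b \<le> D n * stage_absorb (Y n) b"
  shows "stage_reward y b \<le> d * stage_absorb y b"
proof (rule tendsto_le[OF sequentially_bot])
  show "(\<lambda>n. D n * stage_absorb (Y n) b) \<longlonglongrightarrow> d * stage_absorb y b"
    using assms(1,2) by (intro tendsto_mult others_expect_tendsto)
  show "(\<lambda>n. stage_reward (Y n) b) \<longlonglongrightarrow> stage_reward y b"
    using assms(1) by (rule others_expect_tendsto)
qed (rule assms(3))

lemma reward_le_limit_unless_absorb_vanishes:
  assumes conv: "\<forall>j. \<forall>b\<in>A j. (\<lambda>n. Y n j b) \<longlonglongrightarrow> y j b" and y: "mixed_profile y"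
    and "e \<longlonglongrightarrow> 0"
    and alt: "\<And>n. stage_absorb (Y n) b < e n \<or> stage_reward (Y n) b \<le> c * stage_absorb (Y n) b"
  shows "stage_reward y b \<le> c * stage_absorb y b"
proof (cases "stage_absorb y b = 0")
  case True
  then show ?thesis using stage_reward_le_absorb[OF y, of b] by simp
next
  case False
  then have pos: "0 < stage_absorb y b" using stage_absorb_nonneg[OF y, of b] by simp
  have "\<forall>\<^sub>F n in sequentially. e n < stage_absorb y b / 2"
    using order_tendstoD(2)[OF assms(3), of "stage_absorb y b / 2"] pos by simp
  moreover have "\<forall>\<^sub>F n in sequentially. stage_absorb y b / 2 < stage_absorb (Y n) b"
    using order_tendstoD(1)[OF others_expect_tendsto[OF conv], of "stage_absorb y b / 2"] pos
    by simp
  ultimately have "\<forall>\<^sub>F n in sequentially. stage_reward (Y n) b \<le> c * stage_absorb (Y n) b"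
  proof eventually_elim
    case (elim n)
    then show ?case using alt[of n] by auto
  qed
  then show ?thesis by (rule reward_le_limit[OF conv tendsto_const])
qed

lemma closed_ratio_bounds: "closed ratio_bounds"
  unfolding closed_sequential_limits
proof (intro allI impI, elim conjE)
  fix D d assume "\<forall>n. D n \<in> ratio_bounds" and lim: "D \<longlonglongrightarrow> d"
  then have "\<forall>n. \<exists>y. 0 \<le> D n \<and> mixed_profile y \<and> reward_ratio_le y (D n)"
    by (simp add: ratio_bounds_def)
  then obtain Y where D: "\<And>n. 0 \<le> D n" and Y: "\<And>n. mixed_profile (Y n)"
    and ratio: "\<And>n. reward_ratio_le (Y n) (D n)"
    by metis
  obtain rr y where rr: "strict_mono rr" and y: "mixed_profile y"
    and conv: "\<forall>j. \<forall>b\<in>A j. (\<lambda>n. Y (rr n) j b) \<longlonglongrightarrow> y j b"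
    using mixed_convergent_subseq[of Y] Y by blast
  have "(\<lambda>n. D (rr n)) \<longlonglongrightarrow> d"
    using LIMSEQ_subseq_LIMSEQ[OF lim rr] by (simp add: comp_def)
  then have "stage_reward y b \<le> d * stage_absorb y b" if "b \<in> A i" for b
    using ratio that
    by (intro reward_le_limit[OF conv] always_eventually) (auto simp: reward_ratio_le_def)
  moreover have "0 \<le> d" using lim D by (intro LIMSEQ_le_const) auto
  ultimately show "d \<in> ratio_bounds" using y by (auto simp: ratio_bounds_def reward_ratio_le_def)
qed

lemma one_in_ratio_bounds: "1 \<in> ratio_bounds"
  using mixed_profile_exists stage_reward_le_absorb
  by (auto simp: ratio_bounds_def reward_ratio_le_def)

lemma bdd_below_ratio_bounds: "bdd_below ratio_bounds"
  by (rule bdd_belowI[of _ 0]) (simp add: ratio_bounds_def)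

lemma ratio_value_in_bounds: "ratio_value \<in> ratio_bounds"
  unfolding ratio_value_def
  using one_in_ratio_bounds bdd_below_ratio_bounds closed_ratio_bounds
  by (intro closed_contains_Inf) auto

lemma ratio_value_le: "d \<in> ratio_bounds \<Longrightarrow> ratio_value \<le> d"
  by (simp add: ratio_value_def cInf_lower bdd_below_ratio_bounds)

lemma ratio_value_nonneg: "0 \<le> ratio_value"
  using ratio_value_in_bounds by (simp add: ratio_bounds_def)

lemma ratio_value_attained: "\<exists>y. mixed_profile y \<and> reward_ratio_le y ratio_value"
  using ratio_value_in_bounds by (simp add: ratio_bounds_def)

text \<open>If no \<open>\<delta>\<close> worked, a limit of counterexamples along \<open>\<delta> = 1/(n+1)\<close> would satisfy the
  ratio bound \<open>ratio_value - \<epsilon>\<close>: actions with vanishing absorption are harmless in the limit.\<close>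

lemma uniform_good_reply:
  assumes "0 < \<epsilon>" "\<epsilon> \<le> ratio_value"
  shows "\<exists>\<delta>>0. \<forall>y. mixed_profile y \<longrightarrow>
    (\<exists>b\<in>A i. \<delta> \<le> stage_absorb y b \<and> (ratio_value - \<epsilon>) * stage_absorb y b \<le> stage_reward y b)"
proof (rule ccontr)
  let ?c = "ratio_value - \<epsilon>"
  assume "\<not> ?thesis"
  then have "\<forall>n. \<exists>y. mixed_profile y \<and> (\<forall>b\<in>A i. stage_absorb y b < inverse (Suc n)
      \<or> stage_reward y b < ?c * stage_absorb y b)"
    by (metis not_le of_nat_0_less_iff positive_imp_inverse_positive zero_less_Suc)
  then obtain Y where Y: "\<And>n. mixed_profile (Y n)"
    and bad: "\<And>n b. b \<in> A i \<Longrightarrow> stage_absorb (Y n) b < inverse (Suc n)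
      \<or> stage_reward (Y n) b < ?c * stage_absorb (Y n) b"
    by metis
  obtain rr y where rr: "strict_mono rr" and y: "mixed_profile y"
    and conv: "\<forall>j. \<forall>b\<in>A j. (\<lambda>n. Y (rr n) j b) \<longlonglongrightarrow> y j b"
    using mixed_convergent_subseq[of Y] Y by blast
  have "(\<lambda>n. inverse (real (Suc (rr n)))) \<longlonglongrightarrow> 0"
    using LIMSEQ_subseq_LIMSEQ[OF LIMSEQ_inverse_real_of_nat rr] by (simp add: comp_def)
  then have "stage_reward y b \<le> ?c * stage_absorb y b" if "b \<in> A i" for b
    using bad[OF that]
    by (intro reward_le_limit_unless_absorb_vanishes[OF conv y]) (auto intro: less_imp_le)
  then have "?c \<in> ratio_bounds"
    using y assms(2) by (auto simp: ratio_bounds_def reward_ratio_le_def)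
  then show False using ratio_value_le assms(1) by fastforce
qed

section \<open>Payoff bounds through the ratio value\<close>

lemma good_reply_payoff_ge:
  assumes \<tau>: "is_profile A \<tau>" and "0 < \<epsilon>" "\<epsilon> \<le> ratio_value"
  shows "\<exists>s. is_strategy A i s \<and> ratio_value - \<epsilon> \<le> payoff A r p (\<tau>(i := s)) i"
proof -
  obtain \<delta> where "0 < \<delta>" and reply: "\<And>y. mixed_profile y \<Longrightarrow> \<exists>b\<in>A i. \<delta> \<le> stage_absorb y b
      \<and> (ratio_value - \<epsilon>) * stage_absorb y b \<le> stage_reward y b"
    using uniform_good_reply[OF assms(2,3)] by blast
  obtain bs where bs: "\<And>h. bs h \<in> A i" "\<And>h. \<delta> \<le> stage_absorb (mixed_at \<tau> h) (bs h)"
    "\<And>h. (ratio_value - \<epsilon>) * stage_absorb (mixed_at \<tau> h) (bs h)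
      \<le> stage_reward (mixed_at \<tau> h) (bs h)"
    using reply[OF mixed_profile_mixed_at[OF \<tau>]] by metis
  define s where "s h = return_pmf (bs h)" for h
  have s: "is_strategy A i s" using bs(1) by (simp add: s_def is_strategy_def)
  have pure: "expect_at (\<tau>(i := s)) h g = others_expect (mixed_at \<tau> h) g (bs h)" for h g
    using bs(1) by (simp add: expect_at_update s_def indicator_def finite_actions if_distrib
        sum.delta cong: if_cong)
  have "ratio_value - \<epsilon> \<le> payoff A r p (\<tau>(i := s)) i"
    using \<open>0 < \<delta>\<close> bs(2,3) assms(3)
    by (intro payoff_ge[OF profile_update[OF \<tau> s]]) (auto simp: pure)
  then show ?thesis using s by blast
qed

lemma ratio_value_le_minmax: "ratio_value \<le> minmax A r p i"
  unfolding minmax_def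
proof (rule cINF_greatest)
  show "{\<tau>. is_profile A \<tau>} \<noteq> {}" using profile_exists by blast
next
  fix \<tau> assume "\<tau> \<in> {\<tau>. is_profile A \<tau>}"
  then have \<tau>: "is_profile A \<tau>" by simp
  let ?f = "\<lambda>s. payoff A r p (\<tau>(i := s)) i" and ?S = "{s. is_strategy A i s}"
  have bdd: "bdd_above (?f ` ?S)"
    using payoff_le_1 profile_update[OF \<tau>] by (intro bdd_aboveI[of _ 1]) auto
  have "\<tau> i \<in> ?S" using \<tau> by (simp add: is_profile_def)
  then have sup_nonneg: "0 \<le> Sup (?f ` ?S)"
    using payoff_nonneg[OF profile_update[OF \<tau>]] cSUP_upper[OF _ bdd] by fastforce
  have reply: "ratio_value - \<epsilon> \<le> Sup (?f ` ?S)" if \<epsilon>: "0 < \<epsilon>" "\<epsilon> \<le> ratio_value" for \<epsilon>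
  proof -
    obtain s where "s \<in> ?S" "ratio_value - \<epsilon> \<le> ?f s"
      using good_reply_payoff_ge[OF \<tau> \<epsilon>] by blast
    then show ?thesis using cSUP_upper[OF _ bdd] by fastforce
  qed
  show "ratio_value \<le> Sup (?f ` ?S)"
  proof (rule field_le_epsilon)
    fix \<epsilon> :: real assume "0 < \<epsilon>"
    then show "ratio_value \<le> Sup (?f ` ?S) + \<epsilon>"
      using reply[of \<epsilon>] sup_nonneg by (cases "\<epsilon> \<le> ratio_value") auto
  qed
qed

lemma stationary_of_mixed_profile:
  assumes "mixed_profile y"
  shows "\<exists>x. (\<forall>j. set_pmf (x j) \<subseteq> A j) \<and> (\<forall>j. \<forall>b\<in>A j. pmf (x j) b = y j b)"
proof -
  have "\<forall>j. \<exists>xj. set_pmf xj \<subseteq> A j \<and> (\<forall>b\<in>A j. pmf xj b = y j b)"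
    using assms by (auto simp: mixed_profile_def intro!: exists_pmf_of_weights finite_actions)
  then show ?thesis by metis
qed

lemma stationary_payoff_le:
  assumes "reward_ratio_le y d" "0 \<le> d"
    and x: "\<And>j. set_pmf (x j) \<subseteq> A j" "\<And>j b. b \<in> A j \<Longrightarrow> pmf (x j) b = y j b"
    and s: "is_strategy A i s"
  shows "payoff A r p ((\<lambda>j h. x j)(i := s)) i \<le> d"
proof (rule payoff_le[OF _ assms(2)])
  show "is_profile A ((\<lambda>j h. x j)(i := s))"
    using x(1) s by (simp add: is_profile_def is_strategy_def)
  have y: "others_expect (mixed_at (\<lambda>j h. x j) h) g = others_expect y g" for h g
    by (rule others_expect_cong) (simp add: mixed_at_def x(2))
  fix h
  have "absorb_reward ((\<lambda>j h. x j)(i := s)) h = (\<Sum>b\<in>A i. pmf (s h) b * stage_reward y b)"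
    by (simp add: expect_at_update y)
  also have "\<dots> \<le> (\<Sum>b\<in>A i. pmf (s h) b * (d * stage_absorb y b))"
    using assms(1) by (intro sum_mono mult_left_mono) (auto simp: reward_ratio_le_def)
  also have "\<dots> = d * absorb_prob ((\<lambda>j h. x j)(i := s)) h"
    by (simp add: expect_at_update y sum_distrib_left mult_ac)
  finally show "absorb_reward ((\<lambda>j h. x j)(i := s)) h \<le> d * absorb_prob ((\<lambda>j h. x j)(i := s)) h" .
qed

end

theorem mainTheorem3:
  fixes A :: "'i::finite \<Rightarrow> 'a set"
    and r :: "'i \<Rightarrow> ('i \<Rightarrow> 'a) \<Rightarrow> real"
    and p :: "('i \<Rightarrow> 'a) \<Rightarrow> real"
    and i :: 'i
  assumes "pos_rec_absorbing_game A r p"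
  shows "\<exists>x :: 'i \<Rightarrow> 'a pmf. (\<forall>j. set_pmf (x j) \<subseteq> A j) \<and>
           (\<forall>s. is_strategy A i s \<longrightarrow>
              payoff A r p ((\<lambda>j h. x j)(i := s)) i \<le> minmax A r p i)"
proof -
  interpret absorbing_game A r p i using assms by unfold_locales
  obtain y where y: "mixed_profile y" "reward_ratio_le y ratio_value"
    using ratio_value_attained by blast
  obtain x where x: "\<And>j. set_pmf (x j) \<subseteq> A j" "\<And>j b. b \<in> A j \<Longrightarrow> pmf (x j) b = y j b"
    using stationary_of_mixed_profile[OF y(1)] by metis
  have "payoff A r p ((\<lambda>j h. x j)(i := s)) i \<le> minmax A r p i" if "is_strategy A i s" for s
    using stationary_payoff_le[OF y(2) ratio_value_nonneg x that] ratio_value_le_minmax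
    by linarith
  then show ?thesis using x(1) by blast
qed

end
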